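(* For every $d\ge 1$, $\mu_t(\mathit{BF}(d))=2^d$.
   Context: Binary strings $c=c_0\cdots c_{d-1}$ have positions $0,\dots,d-1$ from the left; $c(i)$ is $c$ with bit $i$ complemented. $\mathit{BF}(d)$ has vertex set $\{[\ell,c]:\ell\in\{0,\dots,d\},\ c\in\{0,1\}^d\}$; for $\ell\in\{0,\dots,d-1\}$, $[\ell,c]$ is adjacent to $[\ell+1,c']$ iff $c'=c$ or $c'=c(\ell)$, and there are no other edges. For a connected graph $G$ and $X\subseteq V(G)$, two vertices $x,y$ are $X$-visible if some shortest $x,y$-path has no internal vertex in $X$. $X$ is a total mutual-visibility set if every two vertices of $V(G)$ are $X$-visible; $\mu_t(G)$ is the maximum size of a total mutual-visibility set. *)

theory Defs
  imports Main
begin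

definition is_walk :: "'a set \<Rightarrow> ('a \<Rightarrow> 'a \<Rightarrow> bool) \<Rightarrow> 'a list \<Rightarrow> bool" where
  "is_walk V E p \<longleftrightarrow> p \<noteq> [] \<and> set p \<subseteq> V \<and>
     (\<forall>i. Suc i < length p \<longrightarrow> E (p ! i) (p ! Suc i))"

definition walk_between :: "'a set \<Rightarrow> ('a \<Rightarrow> 'a \<Rightarrow> bool) \<Rightarrow> 'a \<Rightarrow> 'a \<Rightarrow> 'a list \<Rightarrow> bool" where
  "walk_between V E x y p \<longleftrightarrow> is_walk V E p \<and> hd p = x \<and> last p = y"

text \<open>A shortest x,y-path: an x,y-walk of minimum length (such walks are automatically paths).\<close>
definition shortest_path :: "'a set \<Rightarrow> ('a \<Rightarrow> 'a \<Rightarrow> bool) \<Rightarrow> 'a \<Rightarrow> 'a \<Rightarrow> 'a list \<Rightarrow> bool" where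
  "shortest_path V E x y p \<longleftrightarrow> walk_between V E x y p \<and>
     (\<forall>q. walk_between V E x y q \<longrightarrow> length p \<le> length q)"

definition internal :: "'a list \<Rightarrow> 'a set" where
  "internal p = set (butlast (tl p))"

definition X_visible :: "'a set \<Rightarrow> ('a \<Rightarrow> 'a \<Rightarrow> bool) \<Rightarrow> 'a set \<Rightarrow> 'a \<Rightarrow> 'a \<Rightarrow> bool" where
  "X_visible V E X x y \<longleftrightarrow> (\<exists>p. shortest_path V E x y p \<and> internal p \<inter> X = {})"

definition total_mutual_visibility_set :: "'a set \<Rightarrow> ('a \<Rightarrow> 'a \<Rightarrow> bool) \<Rightarrow> 'a set \<Rightarrow> bool" where
  "total_mutual_visibility_set V E X \<longleftrightarrow> X \<subseteq> V \<and> (\<forall>x\<in>V. \<forall>y\<in>V. X_visible V E X x y)"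

definition mu_t :: "'a set \<Rightarrow> ('a \<Rightarrow> 'a \<Rightarrow> bool) \<Rightarrow> nat" where
  "mu_t V E = Max {card X | X. total_mutual_visibility_set V E X}"

text \<open>Vertex [l,c] is the pair (l, c), c a bool list of length d; position i is c ! i.\<close>
definition bf_verts :: "nat \<Rightarrow> (nat \<times> bool list) set" where
  "bf_verts d = {(l, c). l \<le> d \<and> length c = d}"

definition flip :: "bool list \<Rightarrow> nat \<Rightarrow> bool list" where
  "flip c i = c[i := \<not> c ! i]"

definition bf_arc :: "nat \<Rightarrow> nat \<times> bool list \<Rightarrow> nat \<times> bool list \<Rightarrow> bool" where
  "bf_arc d u v \<longleftrightarrow> u \<in> bf_verts d \<and> v \<in> bf_verts d \<and> fst u < d \<and>
     fst v = fst u + 1 \<and> (snd v = snd u \<or> snd v = flip (snd u) (fst u))"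

definition bf_adj :: "nat \<Rightarrow> nat \<times> bool list \<Rightarrow> nat \<times> bool list \<Rightarrow> bool" where
  "bf_adj d u v \<longleftrightarrow> bf_arc d u v \<or> bf_arc d v u"

end

theory Submission
  imports Defs
begin

text \<open>
  Let X be a total mutual-visibility set of BF(d). A vertex (l, c) with 0 < l < d is the only
  common neighbour of (l - 1, c) and (l + 1, c), so it cannot lie in X. At the outer levels,
  (0, c) and (0, c(0)) are the only common neighbours of (1, c) and (1, c(0)), so X contains at
  most one of them; likewise at level d with bit d - 1. Hence |X| \<le> 2^(d-1) + 2^(d-1) = 2^d.
  Conversely, the vertices (0, c) with c_0 = 1 and (d, c) with c_(d-1) = 1 form such a set: each
  has a twin outside the set with the same neighbourhood, and rerouting any shortest path through
  these twins keeps its interior off the set.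
\<close>

lemma walk_between_snoc:
  assumes "walk_between V E x y p" "E y z" "z \<in> V"
  shows "walk_between V E x z (p @ [z])"
proof -
  have "p \<noteq> []" and "last p = y" using assms(1) by (auto simp: walk_between_def is_walk_def)
  have "E (p ! i) ((p @ [z]) ! Suc i)" if "Suc i = length p" for i
  proof -
    have "p ! i = y"
      using that \<open>p \<noteq> []\<close> \<open>last p = y\<close> by (metis diff_Suc_1 last_conv_nth)
    then show ?thesis using that assms(2) by simp
  qed
  then show ?thesis
    using assms(1,3) unfolding walk_between_def is_walk_def
    by (auto simp: nth_append less_Suc_eq)
qed

lemma walk_between_if_rtranclp:
  assumes "E\<^sup>*\<^sup>* x y" "x \<in> V" "\<And>a b. E a b \<Longrightarrow> b \<in> V"
  shows "\<exists>p. walk_between V E x y p"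
  using assms(1)
proof (induction rule: rtranclp_induct)
  case base
  have "walk_between V E x x [x]"
    using assms(2) by (simp add: walk_between_def is_walk_def)
  then show ?case ..
next
  case (step y z)
  then obtain p where "walk_between V E x y p" by blast
  then have "walk_between V E x z (p @ [z])"
    using step(2) assms(3)[OF step(2)] by (rule walk_between_snoc)
  then show ?case ..
qed

lemma shortest_path_if_rtranclp:
  assumes "E\<^sup>*\<^sup>* x y" "x \<in> V" "\<And>a b. E a b \<Longrightarrow> b \<in> V"
  shows "\<exists>p. shortest_path V E x y p"
proof -
  obtain p where "walk_between V E x y p"
    using walk_between_if_rtranclp[of E x y V] assms by blast
  from ex_has_least_nat[of "walk_between V E x y", OF this, of length]
  show ?thesis unfolding shortest_path_def by blast
qed

lemma X_visible_common_neighbour: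
  assumes vis: "X_visible V E X u v" and "u \<noteq> v" "\<not> E u v"
    and "u \<in> V" "w \<in> V" "v \<in> V" "E u w" "E w v"
  shows "\<exists>w'. E u w' \<and> E w' v \<and> w' \<notin> X"
proof -
  obtain p where sp: "shortest_path V E u v p" and int: "internal p \<inter> X = {}"
    using vis unfolding X_visible_def by blast
  have "walk_between V E u v [u, w, v]"
    using assms(4-8) by (auto simp: walk_between_def is_walk_def less_Suc_eq nth_Cons')
  then have "length p \<le> 3"
    using sp by (auto simp: shortest_path_def)
  moreover have ends: "hd p = u" "last p = v" and "p \<noteq> []"
    and adj: "\<And>i. Suc i < length p \<Longrightarrow> E (p ! i) (p ! Suc i)"
    using sp by (auto simp: shortest_path_def walk_between_def is_walk_def)
  moreover have "length p \<noteq> 1"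
    using ends \<open>u \<noteq> v\<close> by (auto simp: length_Suc_conv)
  moreover have "length p \<noteq> 2"
    using ends adj[of 0] \<open>\<not> E u v\<close> by (auto simp: length_Suc_conv numeral_2_eq_2)
  ultimately have "length p = 3"
    by (cases "length p") auto
  then obtain a b c where p: "p = [a, b, c]"
    by (auto simp: length_Suc_conv numeral_3_eq_3)
  show ?thesis
    using p int ends adj[of 0] adj[of 1] by (auto simp: internal_def)
qed

lemma butlast_upt_Suc_0: "butlast [Suc 0..<n] = [Suc 0..<n - 1]"
  by (cases n) (simp_all add: upt_Suc)

lemma X_visible_via_twins:
  assumes sp: "shortest_path V E x y p"
    and sym: "\<And>a b. E a b \<Longrightarrow> E b a"
    and twin_V: "\<And>v. v \<in> V \<Longrightarrow> s v \<in> V - X"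
    and twin_adj: "\<And>v w. v \<in> V \<Longrightarrow> E (s v) w \<longleftrightarrow> E v w"
  shows "X_visible V E X x y"
proof -
  define n where "n = length p"
  define f where "f i = (if i = 0 \<or> i = n - 1 then p ! i else s (p ! i))" for i
  define q where "q = map f [0..<n]"
  have wp: "walk_between V E x y p" and min: "\<And>r. walk_between V E x y r \<Longrightarrow> n \<le> length r"
    using sp by (auto simp: shortest_path_def n_def)
  then have "0 < n" and "p ! 0 = x" and "p ! (n - 1) = y"
    and adj: "\<And>i. Suc i < n \<Longrightarrow> E (p ! i) (p ! Suc i)"
    by (auto simp: walk_between_def is_walk_def n_def hd_conv_nth last_conv_nth)
  have pV: "p ! i \<in> V" if "i < n" for i
    using wp that nth_mem[of i p] by (auto simp: walk_between_def is_walk_def n_def)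
  have fV: "f i \<in> V" if "i < n" for i
    using pV[OF that] twin_V[OF pV[OF that]] by (simp add: f_def)
  have fadj: "E (f i) (f (Suc i))" if "Suc i < n" for i
  proof -
    have a: "p ! i \<in> V" "p ! Suc i \<in> V" using pV that by simp_all
    have e: "E (p ! i) (p ! Suc i)" using adj that .
    then have "E (s (p ! i)) (p ! Suc i)" "E (p ! i) (s (p ! Suc i))"
      using a sym twin_adj by blast+
    moreover from this(2) have "E (s (p ! i)) (s (p ! Suc i))"
      using a twin_adj by blast
    ultimately show ?thesis
      using e unfolding f_def by (cases "i = 0"; cases "Suc i = n - 1") auto
  qed
  have "walk_between V E x y q"
    unfolding walk_between_def is_walk_def
  proof (intro conjI allI impI)
    show "set q \<subseteq> V"
      using fV by (auto simp: q_def)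
    show "q \<noteq> []" "hd q = x" "last q = y"
      using \<open>0 < n\<close> \<open>p ! 0 = x\<close> \<open>p ! (n - 1) = y\<close>
      by (auto simp: q_def f_def hd_map last_map)
    show "E (q ! i) (q ! Suc i)" if "Suc i < length q" for i
      using that fadj by (simp add: q_def)
  qed
  then have "shortest_path V E x y q"
    using min by (simp add: shortest_path_def q_def)
  moreover have "internal q = f ` {Suc 0..<n - 1}"
    by (simp add: internal_def q_def map_tl[symmetric] map_butlast[symmetric] butlast_upt_Suc_0)
  then have "internal q \<inter> X = {}"
    using twin_V pV by (auto simp: f_def)
  ultimately show ?thesis
    unfolding X_visible_def by blast
qed

lemma card_bool_lists: "card {c :: bool list. length c = n} = 2 ^ n"
  using card_lists_length_eq[of "UNIV :: bool set" n] by simp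

lemma finite_bool_lists: "finite {c :: bool list. length c = n}"
  using finite_lists_length_eq[of "UNIV :: bool set" n] by simp

lemma length_flip [simp]: "length (flip c i) = length c"
  by (simp add: flip_def)

lemma flip_flip [simp]: "flip (flip c i) i = c"
  by (cases "i < length c") (auto simp: flip_def list_update_beyond)

lemma nth_flip: "i < length c \<Longrightarrow> flip c j ! i = (if i = j then \<not> c ! i else c ! i)"
  by (simp add: flip_def nth_list_update)

lemma flip_neq: "i < length c \<Longrightarrow> flip c i \<noteq> c"
  by (metis nth_flip)

lemma list_update_eq_or_flip: "c[i := b] = c \<or> c[i := b] = flip c i"
  by (cases "b = c ! i") (auto simp: flip_def)

lemma card_Un_image_disjoint:
  assumes "finite A" "inj_on f A" "A \<inter> f ` A = {}"
  shows "card (A \<union> f ` A) = 2 * card A"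
  using assms by (simp add: card_Un_disjoint card_image)

lemma card_bool_lists_nth:
  assumes "i < n"
  shows "2 * card {c :: bool list. length c = n \<and> c ! i} = 2 ^ n"
proof -
  let ?A = "{c :: bool list. length c = n \<and> c ! i}" and ?f = "\<lambda>c. flip c i"
  have "c \<in> ?f ` ?A" if "length c = n" "\<not> c ! i" for c
    using that assms by (intro image_eqI[of _ _ "flip c i"]) (auto simp: nth_flip)
  then have union: "?A \<union> ?f ` ?A = {c. length c = n}"
    using assms by (auto simp: nth_flip)
  have "?A \<inter> ?f ` ?A = {}"
  proof (intro equals0I)
    fix c assume "c \<in> ?A \<inter> ?f ` ?A"
    then obtain c0 where "c0 \<in> ?A" "c = flip c0 i" "c \<in> ?A" by blast
    then show False using assms by (simp add: nth_flip)
  qed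
  moreover have "inj_on ?f ?A"
    by (rule inj_onI) (metis flip_flip)
  moreover have "finite ?A"
    using finite_bool_lists[of n] by (rule finite_subset[rotated]) auto
  ultimately have "2 * card ?A = card (?A \<union> ?f ` ?A)"
    by (simp add: card_Un_image_disjoint)
  also have "\<dots> = 2 ^ n"
    unfolding union by (rule card_bool_lists)
  finally show ?thesis .
qed

lemma bf_adj_iff:
  "bf_adj d (l, c) (m, c') \<longleftrightarrow>
     l \<le> d \<and> m \<le> d \<and> length c = d \<and> length c' = d \<and> (m = Suc l \<or> l = Suc m) \<and>
     (c' = c \<or> c' = flip c (min l m))"
  unfolding bf_adj_def bf_arc_def bf_verts_def by (auto simp: min_def)

lemma bf_adj_sym: "bf_adj d u v \<Longrightarrow> bf_adj d v u"
  by (auto simp: bf_adj_def)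

lemma bf_adj_verts: "bf_adj d u v \<Longrightarrow> v \<in> bf_verts d"
  by (auto simp: bf_adj_def bf_arc_def)

lemma bf_adj_nth: "bf_adj d (l, c) (m, c') \<Longrightarrow> i \<noteq> min l m \<Longrightarrow> c' ! i = c ! i"
  by (auto simp: bf_adj_iff flip_def)

lemma bf_adj_end_update:
  assumes "l = 0 \<and> i = 0 \<or> l = d \<and> Suc i = d"
  shows "bf_adj d (l, c[i := b]) w \<longleftrightarrow> bf_adj d (l, c) w"
proof -
  obtain m c' where w: "w = (m, c')" by fastforce
  have "c[i := b] = c \<or> c[i := b] = flip c i" by (rule list_update_eq_or_flip)
  then have "(c' = c[i := b] \<or> c' = flip (c[i := b]) i) \<longleftrightarrow> (c' = c \<or> c' = flip c i)"
    by auto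
  moreover have "min l m = i" if "m = Suc l \<or> l = Suc m" "m \<le> d"
    using assms that by auto
  ultimately show ?thesis
    using w by (auto simp: bf_adj_iff)
qed

lemma bf_rtranclp_up:
  assumes "l \<le> d" "length c = d" "length c' = d"
    and "\<And>i. l \<le> i \<Longrightarrow> i < d \<Longrightarrow> c' ! i = c ! i"
  shows "(bf_adj d)\<^sup>*\<^sup>* (0, c) (l, c')"
  using assms
proof (induction l arbitrary: c')
  case 0
  then have "c' = c" by (auto intro: nth_equalityI)
  then show ?case by simp
next
  case (Suc l)
  define c'' where "c'' = c'[l := c ! l]"
  have "(bf_adj d)\<^sup>*\<^sup>* (0, c) (l, c'')"
    using Suc.prems by (intro Suc.IH) (auto simp: c''_def nth_list_update)
  moreover have "c' = c''[l := c' ! l]"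
    using Suc.prems by (simp add: c''_def)
  then have "c' = c'' \<or> c' = flip c'' l"
    by (metis list_update_eq_or_flip)
  then have "bf_adj d (l, c'') (Suc l, c')"
    using Suc.prems by (auto simp: bf_adj_iff c''_def)
  ultimately show ?case ..
qed

lemma bf_connected:
  assumes "x \<in> bf_verts d" "y \<in> bf_verts d"
  shows "(bf_adj d)\<^sup>*\<^sup>* x y"
proof -
  obtain l c l' c' where x: "x = (l, c)" and y: "y = (l', c')" by fastforce
  then have "l \<le> d" "length c = d" "l' \<le> d" "length c' = d"
    using assms by (auto simp: bf_verts_def)
  then have "(bf_adj d)\<^sup>*\<^sup>* (0, c) (l, c)" "(bf_adj d)\<^sup>*\<^sup>* (0, c) (d, c')"
    "(bf_adj d)\<^sup>*\<^sup>* (0, c') (d, c')" "(bf_adj d)\<^sup>*\<^sup>* (0, c') (l', c')"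
    by (auto intro!: bf_rtranclp_up)
  moreover have "symp (bf_adj d)\<^sup>*\<^sup>*"
    by (intro symp_rtranclp sympI) (rule bf_adj_sym)
  ultimately show ?thesis
    unfolding x y by (meson rtranclp_trans sympD)
qed

lemma bf_shortest_path_exists:
  assumes "x \<in> bf_verts d" "y \<in> bf_verts d"
  shows "\<exists>p. shortest_path (bf_verts d) (bf_adj d) x y p"
  using shortest_path_if_rtranclp[OF bf_connected[OF assms] assms(1)] bf_adj_verts by blast

lemma bf_tmv_twins_not_both:
  assumes T: "total_mutual_visibility_set (bf_verts d) (bf_adj d) X"
    and adj: "bf_adj d (l, c) (m, c)"
  shows "(l, c) \<notin> X \<or> (l, flip c (min l m)) \<notin> X"
proof -
  let ?i = "min l m" and ?u = "(m, c)" and ?v = "(m, flip c (min l m))"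
  have h: "l \<le> d" "m \<le> d" "length c = d" "m = Suc l \<or> l = Suc m"
    using adj by (auto simp: bf_adj_iff)
  then have i: "?i < length c" by auto
  have V: "?u \<in> bf_verts d" "(l, c) \<in> bf_verts d" "?v \<in> bf_verts d"
    using h by (auto simp: bf_verts_def)
  then have "X_visible (bf_verts d) (bf_adj d) X ?u ?v"
    using T by (simp add: total_mutual_visibility_set_def)
  moreover have "?u \<noteq> ?v" using flip_neq[OF i] by simp
  moreover have "\<not> bf_adj d ?u ?v" by (simp add: bf_adj_iff)
  moreover have "bf_adj d ?u (l, c)" "bf_adj d (l, c) ?v"
    using h by (auto simp: bf_adj_iff min.commute)
  ultimately obtain w where w: "bf_adj d ?u w" "bf_adj d w ?v" "w \<notin> X"
    using X_visible_common_neighbour[where E = "bf_adj d" and w = "(l, c)"] V by blast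
  obtain k c' where wk: "w = (k, c')" by fastforce
  show ?thesis
  proof (cases "k = l")
    case True
    then have "c' = c \<or> c' = flip c ?i"
      using w(1) wk by (auto simp: bf_adj_iff min.commute)
    then show ?thesis using w(3) wk True by auto
  next
    case False
    \<comment> \<open>a common neighbour on the far level would agree at bit i with both c and flip c i\<close>
    moreover have "k = Suc m \<or> m = Suc k"
      using w(1) unfolding wk bf_adj_iff by blast
    ultimately have "?i \<noteq> min m k"
      using h(4) by (auto simp: min_def)
    then have "c' ! ?i = c ! ?i" "c' ! ?i = flip c ?i ! ?i"
      using bf_adj_nth[of d m c k c' ?i] bf_adj_nth[of d m "flip c ?i" k c' ?i]
        w(1) bf_adj_sym[OF w(2)] wk by auto
    then show ?thesis using i by (simp add: nth_flip)
  qed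
qed

lemma bf_tmv_level:
  assumes T: "total_mutual_visibility_set (bf_verts d) (bf_adj d) X"
    and inX: "(l, c) \<in> X"
  shows "l = 0 \<or> l = d"
proof (rule ccontr)
  assume "\<not> (l = 0 \<or> l = d)"
  moreover have "(l, c) \<in> bf_verts d"
    using T inX by (auto simp: total_mutual_visibility_set_def)
  ultimately have h: "0 < l" "l < d" "length c = d"
    by (auto simp: bf_verts_def)
  let ?u = "(l - 1, c)" and ?v = "(Suc l, c)"
  have V: "?u \<in> bf_verts d" "(l, c) \<in> bf_verts d" "?v \<in> bf_verts d"
    using h by (auto simp: bf_verts_def)
  then have "X_visible (bf_verts d) (bf_adj d) X ?u ?v"
    using T by (simp add: total_mutual_visibility_set_def)
  moreover have "?u \<noteq> ?v" "\<not> bf_adj d ?u ?v"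
    using h by (auto simp: bf_adj_iff)
  moreover have "bf_adj d ?u (l, c)" "bf_adj d (l, c) ?v"
    using h by (auto simp: bf_adj_iff)
  ultimately obtain w where w: "bf_adj d ?u w" "bf_adj d w ?v" "w \<notin> X"
    using X_visible_common_neighbour[where E = "bf_adj d" and w = "(l, c)"] V by blast
  obtain k c' where wk: "w = (k, c')" by fastforce
  have "k = Suc (l - 1) \<or> l - 1 = Suc k" "k = Suc (Suc l) \<or> Suc l = Suc k"
    using w(1,2) unfolding wk bf_adj_iff by blast+
  then have "k = l"
    using h(1) by auto
  \<comment> \<open>the two edges at w can change only bit l - 1 and bit l, respectively\<close>
  have "c' = c"
  proof (rule nth_equalityI)
    show "length c' = length c"
      using w(1) wk by (auto simp: bf_adj_iff)
    show "c' ! i = c ! i" for i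
    proof (cases "i = l")
      case True
      then have "i \<noteq> min (l - 1) l" using h(1) by simp
      then show ?thesis
        using bf_adj_nth w(1) wk \<open>k = l\<close> by blast
    next
      case False
      then have "i \<noteq> min (Suc l) l" by simp
      then show ?thesis
        using bf_adj_nth bf_adj_sym[OF w(2)] wk \<open>k = l\<close> by blast
    qed
  qed
  then show False
    using w(3) wk \<open>k = l\<close> inX by simp
qed

lemma bf_tmv_card_level:
  assumes T: "total_mutual_visibility_set (bf_verts d) (bf_adj d) X"
    and "l \<le> d" "m \<le> d" "m = Suc l \<or> l = Suc m"
  shows "2 * card {c. (l, c) \<in> X} \<le> 2 ^ d"
proof -
  let ?A = "{c. (l, c) \<in> X}" and ?f = "\<lambda>c. flip c (min l m)"
  have sub: "?A \<subseteq> {c. length c = d}"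
    using T by (auto simp: total_mutual_visibility_set_def bf_verts_def)
  have adj: "bf_adj d (l, c) (m, c)" if "c \<in> ?A" for c
    using sub that assms(2-4) by (auto simp: bf_adj_iff)
  have "?A \<inter> ?f ` ?A = {}"
  proof (intro equals0I)
    fix c assume "c \<in> ?A \<inter> ?f ` ?A"
    then obtain c0 where "c0 \<in> ?A" "c = flip c0 (min l m)" "c \<in> ?A" by blast
    then show False using bf_tmv_twins_not_both[OF T adj[of c0]] by simp
  qed
  moreover have "inj_on ?f ?A"
    by (rule inj_onI) (metis flip_flip)
  moreover have "finite ?A"
    using sub finite_bool_lists by (rule finite_subset)
  ultimately have "2 * card ?A = card (?A \<union> ?f ` ?A)"
    by (simp add: card_Un_image_disjoint)
  also have "\<dots> \<le> card {c :: bool list. length c = d}"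
    using sub by (intro card_mono finite_bool_lists) auto
  finally show ?thesis
    by (simp add: card_bool_lists)
qed

lemma bf_tmv_card_le:
  assumes T: "total_mutual_visibility_set (bf_verts d) (bf_adj d) X" and "1 \<le> d"
  shows "card X \<le> 2 ^ d"
proof -
  define A where "A l = {c. (l, c) \<in> X}" for l
  have "A l \<subseteq> {c. length c = d}" for l
    using T by (auto simp: A_def total_mutual_visibility_set_def bf_verts_def)
  then have fin: "finite (A l)" for l
    using finite_bool_lists by (rule finite_subset)
  have "X \<subseteq> Pair 0 ` A 0 \<union> Pair d ` A d"
  proof
    fix v assume "v \<in> X"
    moreover obtain l c where "v = (l, c)" by (cases v)
    ultimately have "l = 0 \<or> l = d"
      using bf_tmv_level[OF T] by blast
    then show "v \<in> Pair 0 ` A 0 \<union> Pair d ` A d"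
      using \<open>v \<in> X\<close> \<open>v = (l, c)\<close> by (auto simp: A_def)
  qed
  then have "card X \<le> card (Pair 0 ` A 0 \<union> Pair d ` A d)"
    by (rule card_mono[rotated]) (simp add: fin)
  also have "\<dots> \<le> card (Pair (0 :: nat) ` A 0) + card (Pair d ` A d)"
    by (rule card_Un_le)
  also have "\<dots> \<le> card (A 0) + card (A d)"
    by (intro add_mono card_image_le fin)
  finally have "card X \<le> card (A 0) + card (A d)" .
  moreover have "2 * card (A 0) \<le> 2 ^ d" "2 * card (A d) \<le> 2 ^ d"
    unfolding A_def using assms(2)
    by (auto intro!: bf_tmv_card_level[OF T, of 0 1] bf_tmv_card_level[OF T, of d "d - 1"])
  ultimately show ?thesis
    by linarith
qed

lemma bf_tmv_exists:
  assumes "1 \<le> d"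
  shows "\<exists>X. total_mutual_visibility_set (bf_verts d) (bf_adj d) X \<and> card X = 2 ^ d"
proof -
  define H where "H i = {c :: bool list. length c = d \<and> c ! i}" for i
  define X where "X = Pair 0 ` H 0 \<union> Pair d ` H (d - 1)"
  \<comment> \<open>s v is a twin of v (same neighbourhood) lying outside X\<close>
  define s where "s = (\<lambda>(l, c). (l, if l = 0 then c[0 := False]
                                   else if l = d then c[d - 1 := False] else c))"
  have memX: "(l, c) \<in> X \<longleftrightarrow> length c = d \<and> (l = 0 \<and> c ! 0 \<or> l = d \<and> c ! (d - 1))"
    for l c
    using assms by (auto simp: X_def H_def)
  have twin: "s v \<in> bf_verts d - X" if vV: "v \<in> bf_verts d" for v
  proof -
    obtain l c where v: "v = (l, c)" "l \<le> d" "length c = d"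
      using vV by (cases v) (auto simp: bf_verts_def)
    moreover have "0 < length c" "d - 1 < length c"
      using v(3) assms by auto
    ultimately show ?thesis
      by (cases "l = 0"; cases "l = d") (simp_all add: s_def memX bf_verts_def)
  qed
  have twin_adj: "bf_adj d (s v) w \<longleftrightarrow> bf_adj d v w" for v w
  proof -
    obtain l c where v: "v = (l, c)" by (cases v)
    consider "l = 0" | "l \<noteq> 0" "l = d" | "l \<noteq> 0" "l \<noteq> d" by blast
    then show ?thesis
      using assms by cases (simp_all add: v s_def bf_adj_end_update)
  qed
  have "X_visible (bf_verts d) (bf_adj d) X x y"
    if xy: "x \<in> bf_verts d" "y \<in> bf_verts d" for x y
  proof -
    obtain p where "shortest_path (bf_verts d) (bf_adj d) x y p"
      using bf_shortest_path_exists[OF xy] by blast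
    then show ?thesis
    proof (rule X_visible_via_twins[where s = s])
      show "bf_adj d b a" if "bf_adj d a b" for a b
        using that by (rule bf_adj_sym)
    qed (use twin twin_adj in blast)+
  qed
  moreover have "X \<subseteq> bf_verts d"
    using assms by (auto simp: X_def H_def bf_verts_def)
  moreover have "card X = card (H 0) + card (H (d - 1))"
    unfolding X_def using assms finite_bool_lists
    by (subst card_Un_disjoint) (auto simp: card_image inj_on_def H_def)
  then have "card X = 2 ^ d"
    using card_bool_lists_nth[of 0 d] card_bool_lists_nth[of "d - 1" d] assms
    unfolding H_def by linarith
  ultimately show ?thesis
    unfolding total_mutual_visibility_set_def by blast
qed

theorem theorem5p6:
  fixes d :: nat
  assumes "d \<ge> 1"
  shows "mu_t (bf_verts d) (bf_adj d) = 2 ^ d"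
proof -
  let ?S = "{card X | X. total_mutual_visibility_set (bf_verts d) (bf_adj d) X}"
  have bound: "?S \<subseteq> {..2 ^ d}"
    using bf_tmv_card_le assms by auto
  then have "finite ?S"
    by (rule finite_subset) simp
  moreover have "2 ^ d \<in> ?S"
    using bf_tmv_exists[OF assms] by (metis (mono_tags, lifting) mem_Collect_eq)
  ultimately have "Max ?S = 2 ^ d"
    using Max_eqI bound by auto
  then show ?thesis
    by (simp add: mu_t_def)
qed

end
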